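(* Let $\boldsymbol{W}\in\mathbb{R}^{N\times d}$ have unit-norm rows $\boldsymbol{w}_j$, let $|b_j|\le r_b$ for all $j$, and let $S\subseteq[N]$ be such that $\|\Pi_{\boldsymbol{U}}\boldsymbol{w}_j-\boldsymbol{w}_j\|^2\le2\zeta$ for all $j\in S$. Let $\boldsymbol{a}^*\in\mathbb{R}^N$ satisfy $a^*_j=0$ for $j\notin S$ and $\|\boldsymbol{a}^*\|\le\tilde r_a/\sqrt{|S|}$. Assume $\boldsymbol{x}$ is zero-mean with subGaussian norm bounded by an absolute constant and $\sigma$ satisfies condition (PL). Then $$\mathbb{E}\Big[\max_{\|\boldsymbol{\delta}\|\le\varepsilon}\big(f(\boldsymbol{x}+\boldsymbol{\delta};\boldsymbol{a}^*,\Pi_{\boldsymbol{U}}\boldsymbol{W},\boldsymbol{b})-f(\boldsymbol{x}+\boldsymbol{\delta};\boldsymbol{a}^*,\boldsymbol{W},\boldsymbol{b})\big)^2\Big]\le C_{\bar q}L_\sigma^2\tilde r_a^2\big(1+r_b^{2(\bar q-1)}+\varepsilon^{2(\bar q-1)}\big)(1+\varepsilon^2)\zeta,$$ where $C_{\bar q}$ depends only on $\bar q$.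
   Context: $\boldsymbol{U}\in\mathbb{R}^{k\times d}$ has orthonormal rows $\boldsymbol{u}_1,\dots,\boldsymbol{u}_k$. For unit $\boldsymbol{w}$, $\Pi_{\boldsymbol{U}}\boldsymbol{w}=\boldsymbol{U}^\top\boldsymbol{U}\boldsymbol{w}/\|\boldsymbol{U}\boldsymbol{w}\|$ (and $\Pi_{\boldsymbol{U}}\boldsymbol{w}=\boldsymbol{u}_1$ if $\boldsymbol{U}\boldsymbol{w}=0$); $\Pi_{\boldsymbol{U}}\boldsymbol{W}$ is the matrix with rows $\Pi_{\boldsymbol{U}}\boldsymbol{w}_j$. Network $f(\boldsymbol{x};\boldsymbol{a},\boldsymbol{W},\boldsymbol{b})=\sum_ja_j\sigma(\langle\boldsymbol{w}_j,\boldsymbol{x}\rangle+b_j)$. Condition (PL): $\sigma(0)=0$ and $|\sigma(z_1)-\sigma(z_2)|\le L_\sigma(|z_1|^{\bar q-1}+|z_2|^{\bar q-1}+1)|z_1-z_2|$ for all $z_1,z_2$, with $\bar q\ge1$. $\varepsilon\ge0$ is the adversary budget. *)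

theory Defs
  imports "HOL-Probability.Probability"
begin

(* Vectors in R^d are represented as functions nat => real, only indices < d matter.
   Matrices are nat => nat => real (row index, column index). *)

definition dot :: "nat \<Rightarrow> (nat \<Rightarrow> real) \<Rightarrow> (nat \<Rightarrow> real) \<Rightarrow> real" where
  "dot d v w = (\<Sum>i<d. v i * w i)"

definition vnorm :: "nat \<Rightarrow> (nat \<Rightarrow> real) \<Rightarrow> real" where
  "vnorm d v = sqrt (dot d v v)"

(* power with the convention x^0 = 1 (also for x = 0), for x >= 0 *)
definition npow :: "real \<Rightarrow> real \<Rightarrow> real" where
  "npow x a = (if a = 0 then 1 else x powr a)"

definition orthonormal_rows :: "nat \<Rightarrow> nat \<Rightarrow> (nat \<Rightarrow> nat \<Rightarrow> real) \<Rightarrow> bool" where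
  "orthonormal_rows k d U \<longleftrightarrow> (\<forall>l<k. \<forall>m<k. dot d (U l) (U m) = (if l = m then 1 else 0))"

definition Umul :: "nat \<Rightarrow> (nat \<Rightarrow> nat \<Rightarrow> real) \<Rightarrow> (nat \<Rightarrow> real) \<Rightarrow> (nat \<Rightarrow> real)" where
  "Umul d U w = (\<lambda>l. dot d (U l) w)"

(* Pi_U w = U^T U w / ||U w||, and = u_1 (first row) if U w = 0 *)
definition proj_U :: "nat \<Rightarrow> nat \<Rightarrow> (nat \<Rightarrow> nat \<Rightarrow> real) \<Rightarrow> (nat \<Rightarrow> real) \<Rightarrow> (nat \<Rightarrow> real)" where
  "proj_U k d U w =
     (if vnorm k (Umul d U w) = 0 then (\<lambda>i. if i < d then U 0 i else 0)
      else (\<lambda>i. if i < d then (\<Sum>l<k. U l i * Umul d U w l) / vnorm k (Umul d U w) else 0))"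

definition projW :: "nat \<Rightarrow> nat \<Rightarrow> (nat \<Rightarrow> nat \<Rightarrow> real) \<Rightarrow> (nat \<Rightarrow> nat \<Rightarrow> real) \<Rightarrow> (nat \<Rightarrow> nat \<Rightarrow> real)" where
  "projW k d U W = (\<lambda>j. proj_U k d U (W j))"

definition net :: "nat \<Rightarrow> nat \<Rightarrow> (real \<Rightarrow> real) \<Rightarrow> (nat \<Rightarrow> real) \<Rightarrow> (nat \<Rightarrow> nat \<Rightarrow> real)
                   \<Rightarrow> (nat \<Rightarrow> real) \<Rightarrow> (nat \<Rightarrow> real) \<Rightarrow> real" where
  "net N d \<sigma> a W b x = (\<Sum>j<N. a j * \<sigma> (dot d (W j) x + b j))"

definition PL_cond :: "(real \<Rightarrow> real) \<Rightarrow> real \<Rightarrow> real \<Rightarrow> bool" where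
  "PL_cond \<sigma> q L \<longleftrightarrow> \<sigma> 0 = 0 \<and>
     (\<forall>z1 z2. \<bar>\<sigma> z1 - \<sigma> z2\<bar> \<le> L * (npow \<bar>z1\<bar> (q - 1) + npow \<bar>z2\<bar> (q - 1) + 1) * \<bar>z1 - z2\<bar>)"

(* scalar subGaussian (psi_2) norm: inf { t > 0 : E exp(X^2/t^2) <= 2 } (infinite if no such t) *)
definition psi2_norm :: "'a measure \<Rightarrow> ('a \<Rightarrow> real) \<Rightarrow> ereal" where
  "psi2_norm M X = Inf {ereal t | t. t > 0 \<and> (\<integral>\<^sup>+ \<omega>. ennreal (exp ((X \<omega>)\<^sup>2 / t\<^sup>2)) \<partial>M) \<le> 2}"

definition vec_psi2_norm :: "nat \<Rightarrow> (nat \<Rightarrow> real) measure \<Rightarrow> ereal" where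
  "vec_psi2_norm d M = (SUP v\<in>{v. vnorm d v = 1}. psi2_norm M (\<lambda>x. dot d v x))"

definition dball :: "nat \<Rightarrow> real \<Rightarrow> (nat \<Rightarrow> real) set" where
  "dball d \<epsilon> = {\<delta>. (\<forall>i\<ge>d. \<delta> i = 0) \<and> vnorm d \<delta> \<le> \<epsilon>}"

end

theory Submission
  imports Defs
begin

text \<open>Only the neurons in \<open>S\<close> contribute, so by Cauchy-Schwarz the squared difference of the
  two networks is at most \<open>\<parallel>a\<parallel>\<^sup>2\<close> times the sum over \<open>S\<close> of the squared neuron differences.
  For a single neuron, (PL) bounds the difference by a polynomial in \<open>|\<langle>w, x\<rangle>|\<close>,
  \<open>|\<langle>\<Pi>w, x\<rangle>|\<close>, \<open>|\<langle>u, x\<rangle>|\<close> (with \<open>u\<close> the unit direction of \<open>\<Pi>w - w\<close>), times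
  \<open>\<parallel>\<Pi>w - w\<parallel> \<le> \<surd>(2\<zeta>)\<close>; the perturbation only enters through \<open>\<parallel>\<delta>\<parallel> \<le> \<epsilon>\<close>, uniformly in \<open>\<delta>\<close>.
  A polynomial in \<open>|s|\<close> is dominated by a multiple of \<open>exp (s\<^sup>2 / t\<^sup>2)\<close>, whose expectation is
  at most 2 for every unit direction once \<open>t\<close> exceeds the subGaussian norm. Summing the \<open>|S|\<close>
  bounds and using \<open>\<parallel>a\<parallel>\<^sup>2 |S| \<le> r\<^sub>a\<^sup>2\<close> gives the claim.\<close>

lemma npow_nonneg: "0 \<le> npow s p"
  by (simp add: npow_def)

lemma npow_mono: "0 \<le> a \<Longrightarrow> a \<le> b \<Longrightarrow> 0 \<le> p \<Longrightarrow> npow a p \<le> npow b p"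
  by (simp add: npow_def powr_mono2)

lemma npow_ge_1: "1 \<le> s \<Longrightarrow> 0 \<le> p \<Longrightarrow> 1 \<le> npow s p"
  by (simp add: npow_def ge_one_powr_ge_zero)

lemma npow_mult: "0 \<le> s \<Longrightarrow> 0 \<le> t \<Longrightarrow> npow (s * t) p = npow s p * npow t p"
  by (simp add: npow_def powr_mult)

lemma npow_double: "0 \<le> s \<Longrightarrow> 0 \<le> p \<Longrightarrow> npow s (2 * p) = (npow s p)\<^sup>2"
  by (auto simp: npow_def powr_powr[symmetric] power2_eq_square powr_add[symmetric])

lemma npow_numeral: "0 \<le> s \<Longrightarrow> npow s (numeral n) = s ^ numeral n"
  by (cases "s = 0") (auto simp: npow_def powr_realpow)

lemma npow_add3_le:
  assumes "0 \<le> a" "0 \<le> b" "0 \<le> c" "0 \<le> p"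
  shows "npow (a + b + c) p \<le> npow 3 p * (npow a p + npow b p + npow c p)"
proof -
  define m where "m = max a (max b c)"
  have "0 \<le> m" using assms by (simp add: m_def)
  have "npow (a + b + c) p \<le> npow (3 * m) p"
    using assms by (intro npow_mono) (auto simp: m_def)
  also have "\<dots> = npow 3 p * npow m p"
    using \<open>0 \<le> m\<close> by (simp add: npow_mult)
  also have "\<dots> \<le> npow 3 p * (npow a p + npow b p + npow c p)"
    using npow_nonneg[of a p] npow_nonneg[of b p] npow_nonneg[of c p]
    by (intro mult_left_mono) (auto simp: m_def max_def npow_nonneg)
  finally show ?thesis .
qed

lemma npow_le_exp_square_unscaled:
  assumes "0 \<le> s" "0 \<le> r"
  shows "npow s r \<le> exp (r\<^sup>2 / 4) * exp (s\<^sup>2)"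
proof (cases "r = 0 \<or> s = 0")
  case True
  then show ?thesis using assms by (auto simp: npow_def)
next
  case False
  then have "0 < s" "r \<noteq> 0" using assms by auto
  have "npow s r = exp (r * ln s)"
    using False \<open>0 < s\<close> by (simp add: npow_def powr_def)
  also have "\<dots> \<le> exp (r * s)"
    using ln_le_minus_one[OF \<open>0 < s\<close>] assms by (simp add: mult_left_mono)
  also have "r * s \<le> r\<^sup>2 / 4 + s\<^sup>2"
    using zero_le_power2[of "s - r / 2"] by (simp add: power2_eq_square algebra_simps)
  finally show ?thesis by (simp add: exp_add)
qed

lemma npow_le_exp_square:
  assumes "0 \<le> s" "0 \<le> r" "0 < t"
  shows "npow s r \<le> npow t r * exp (r\<^sup>2 / 4) * exp ((s / t)\<^sup>2)"
proof -
  have "npow s r = npow t r * npow (s / t) r"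
    using assms by (simp add: npow_def powr_divide)
  also have "\<dots> \<le> npow t r * (exp (r\<^sup>2 / 4) * exp ((s / t)\<^sup>2))"
    using assms by (intro mult_left_mono npow_le_exp_square_unscaled) (auto simp: npow_nonneg)
  finally show ?thesis by simp
qed

lemma add_one_mult_add_one_le:
  fixes a b y :: real
  shows "(a + b + 1) * (y + 1) \<le> 3 * (a\<^sup>2 + b\<^sup>2 + 1) + 2 * (y\<^sup>2 + 1)"
proof -
  have "2 * ((a + b + 1) * (y + 1)) \<le> (a + b + 1)\<^sup>2 + (y + 1)\<^sup>2"
    using zero_le_power2[of "a + b + 1 - (y + 1)"] by (simp add: power2_eq_square algebra_simps)
  also have "\<dots> \<le> 3 * (a\<^sup>2 + b\<^sup>2 + 1) + 2 * (y\<^sup>2 + 1)"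
    using zero_le_power2[of "a - b"] zero_le_power2[of "a - 1"] zero_le_power2[of "b - 1"]
      zero_le_power2[of "y - 1"] by (simp add: power2_eq_square algebra_simps)
  finally show ?thesis
    using zero_le_power2[of a] zero_le_power2[of b] zero_le_power2[of y] by (smt (verit))
qed

lemma poly_le_exp_sum:
  fixes p t :: real
  assumes "0 \<le> p" "0 < t"
  obtains C where "0 \<le> C" and "\<And>A B Y. 0 \<le> A \<Longrightarrow> 0 \<le> B \<Longrightarrow> 0 \<le> Y \<Longrightarrow>
    ((npow A p)\<^sup>2 + (npow B p)\<^sup>2 + 1) * (Y\<^sup>2 + 1)
      \<le> C * (exp ((A / t)\<^sup>2) + exp ((B / t)\<^sup>2) + exp ((Y / t)\<^sup>2))"
proof
  define c1 where "c1 = npow t (4 * p) * exp ((4 * p)\<^sup>2 / 4)"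
  define c2 where "c2 = npow t 4 * exp (4\<^sup>2 / 4)"
  have "0 \<le> c1" "0 \<le> c2" by (simp_all add: c1_def c2_def npow_nonneg)
  then show "0 \<le> 3 * c1 + 2 * c2 + 5" by simp
  have quartic: "((npow s p)\<^sup>2)\<^sup>2 \<le> c1 * exp ((s / t)\<^sup>2)" if "0 \<le> s" for s
    using npow_le_exp_square[of s "4 * p" t] npow_double[of s p] npow_double[of s "2 * p"]
      that assms by (simp add: c1_def mult.assoc)
  fix A B Y :: real
  assume "0 \<le> A" "0 \<le> B" "0 \<le> Y"
  define EA where "EA = exp ((A / t)\<^sup>2)"
  define EB where "EB = exp ((B / t)\<^sup>2)"
  define EY where "EY = exp ((Y / t)\<^sup>2)"
  have "1 \<le> EA" "1 \<le> EB" "1 \<le> EY" by (simp_all add: EA_def EB_def EY_def)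
  have "((npow A p)\<^sup>2)\<^sup>2 \<le> c1 * EA" "((npow B p)\<^sup>2)\<^sup>2 \<le> c1 * EB"
    using quartic \<open>0 \<le> A\<close> \<open>0 \<le> B\<close> by (simp_all add: EA_def EB_def)
  moreover have "(Y\<^sup>2)\<^sup>2 \<le> c2 * EY"
    using npow_le_exp_square[of Y 4 t] \<open>0 \<le> Y\<close> assms
    by (simp add: c2_def EY_def npow_numeral mult.assoc flip: power_mult)
  ultimately have "((npow A p)\<^sup>2 + (npow B p)\<^sup>2 + 1) * (Y\<^sup>2 + 1)
      \<le> 3 * (c1 * EA + c1 * EB) + 2 * (c2 * EY) + 5"
    using add_one_mult_add_one_le[of "(npow A p)\<^sup>2" "(npow B p)\<^sup>2" "Y\<^sup>2"]
    by (simp add: algebra_simps)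
  also have "\<dots> \<le> (3 * c1 + 2 * c2 + 5) * (EA + EB + EY)"
    using \<open>1 \<le> EA\<close> \<open>1 \<le> EB\<close> \<open>1 \<le> EY\<close> \<open>0 \<le> c1\<close> \<open>0 \<le> c2\<close>
    by (simp add: algebra_simps add_increasing add_increasing2)
  finally show "((npow A p)\<^sup>2 + (npow B p)\<^sup>2 + 1) * (Y\<^sup>2 + 1)
      \<le> (3 * c1 + 2 * c2 + 5) * (exp ((A / t)\<^sup>2) + exp ((B / t)\<^sup>2) + exp ((Y / t)\<^sup>2))"
    by (simp add: EA_def EB_def EY_def)
qed

lemma PL_cond_nonneg:
  assumes "PL_cond \<sigma> q L"
  shows "0 \<le> L"
proof (rule ccontr)
  assume "\<not> 0 \<le> L"
  have "\<bar>\<sigma> 1 - \<sigma> 0\<bar> \<le> L * (npow 1 (q - 1) + npow 0 (q - 1) + 1) * 1"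
    using assms unfolding PL_cond_def by (metis abs_0 abs_1 diff_zero)
  moreover have "0 < npow 1 (q - 1) + npow 0 (q - 1) + 1"
    using npow_nonneg[of 1 "q - 1"] npow_nonneg[of 0 "q - 1"] by linarith
  ultimately show False
    using \<open>\<not> 0 \<le> L\<close> by (smt (verit) mult_neg_pos)
qed

lemma sq_sum_le_product:
  fixes a b e r :: real
  shows "(a + b + 1 + (e + r))\<^sup>2 \<le> 6 * (a\<^sup>2 + b\<^sup>2 + 1) * (1 + r\<^sup>2 + e\<^sup>2)"
proof -
  define G where "G = a\<^sup>2 + b\<^sup>2 + 1"
  define h where "h = r\<^sup>2 + e\<^sup>2"
  have "1 \<le> G" "0 \<le> h" by (simp_all add: G_def h_def)
  have "(a + b + 1 + (e + r))\<^sup>2 \<le> 2 * (a + b + 1)\<^sup>2 + 2 * (e + r)\<^sup>2"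
    using zero_le_power2[of "a + b + 1 - (e + r)"] by (simp add: power2_eq_square algebra_simps)
  also have "(a + b + 1)\<^sup>2 \<le> 3 * G"
    using zero_le_power2[of "a - b"] zero_le_power2[of "a - 1"] zero_le_power2[of "b - 1"]
    by (simp add: G_def power2_eq_square algebra_simps)
  also have "(e + r)\<^sup>2 \<le> 2 * h"
    using zero_le_power2[of "e - r"] by (simp add: h_def power2_eq_square algebra_simps)
  also have "2 * (3 * G) + 2 * (2 * h) \<le> 6 * G * (1 + h)"
    using mult_right_mono[OF \<open>1 \<le> G\<close> \<open>0 \<le> h\<close>] \<open>0 \<le> h\<close> by (simp add: algebra_simps)
  finally show ?thesis by (simp add: G_def h_def add.assoc)
qed

lemma PL_diff_sq_le:
  assumes PL: "PL_cond \<sigma> q L" and "1 \<le> q" "0 \<le> \<epsilon>" "0 \<le> r"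
    and "0 \<le> A" "0 \<le> B" "0 \<le> Y" "0 \<le> \<nu>"
    and z1: "\<bar>z1\<bar> \<le> B + \<epsilon> + r" and z2: "\<bar>z2\<bar> \<le> A + \<epsilon> + r"
    and z12: "\<bar>z1 - z2\<bar> \<le> \<nu> * (Y + \<epsilon>)"
  shows "(\<sigma> z1 - \<sigma> z2)\<^sup>2 \<le> 48 * (npow 3 (q - 1))\<^sup>2 * L\<^sup>2 * \<nu>\<^sup>2
           * (1 + npow r (2 * (q - 1)) + npow \<epsilon> (2 * (q - 1))) * (1 + \<epsilon>\<^sup>2)
           * (((npow A (q - 1))\<^sup>2 + (npow B (q - 1))\<^sup>2 + 1) * (Y\<^sup>2 + 1))"
proof -
  define p where "p = q - 1"
  have "0 \<le> p" using \<open>1 \<le> q\<close> by (simp add: p_def)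
  define c where "c = npow 3 p"
  have "1 \<le> c" using \<open>0 \<le> p\<close> by (simp add: c_def npow_ge_1)
  define X where "X = npow A p + npow B p + 1"
  define Z where "Z = npow \<epsilon> p + npow r p"
  have "npow \<bar>z1\<bar> p \<le> c * (npow B p + npow \<epsilon> p + npow r p)"
    using npow_mono[OF abs_ge_zero z1 \<open>0 \<le> p\<close>] npow_add3_le[of B \<epsilon> r p] assms \<open>0 \<le> p\<close>
    by (simp add: c_def)
  moreover have "npow \<bar>z2\<bar> p \<le> c * (npow A p + npow \<epsilon> p + npow r p)"
    using npow_mono[OF abs_ge_zero z2 \<open>0 \<le> p\<close>] npow_add3_le[of A \<epsilon> r p] assms \<open>0 \<le> p\<close>
    by (simp add: c_def)
  moreover have "0 \<le> c * npow A p" "0 \<le> c * npow B p"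
    using \<open>1 \<le> c\<close> by (simp_all add: npow_nonneg)
  ultimately have growth: "npow \<bar>z1\<bar> p + npow \<bar>z2\<bar> p + 1 \<le> 2 * c * (X + Z)"
    using \<open>1 \<le> c\<close> by (simp add: X_def Z_def algebra_simps)
  have "\<bar>\<sigma> z1 - \<sigma> z2\<bar> \<le> L * (npow \<bar>z1\<bar> p + npow \<bar>z2\<bar> p + 1) * \<bar>z1 - z2\<bar>"
    using PL unfolding PL_cond_def p_def by blast
  also have "\<dots> \<le> L * (2 * c * (X + Z)) * (\<nu> * (Y + \<epsilon>))"
    using PL_cond_nonneg[OF PL] growth z12 npow_nonneg[of "\<bar>z1\<bar>" p] npow_nonneg[of "\<bar>z2\<bar>" p]
    by (intro mult_mono) (auto simp: add_nonneg_nonneg)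
  finally have "(\<sigma> z1 - \<sigma> z2)\<^sup>2 \<le> (L * (2 * c * (X + Z)) * (\<nu> * (Y + \<epsilon>)))\<^sup>2"
    by (metis abs_ge_zero order.trans power2_abs power_mono)
  also have "\<dots> = 4 * c\<^sup>2 * L\<^sup>2 * \<nu>\<^sup>2 * (X + Z)\<^sup>2 * (Y + \<epsilon>)\<^sup>2"
    by (simp add: power_mult_distrib)
  also have "\<dots> \<le> 4 * c\<^sup>2 * L\<^sup>2 * \<nu>\<^sup>2 * (6 * ((npow A p)\<^sup>2 + (npow B p)\<^sup>2 + 1)
                  * (1 + (npow r p)\<^sup>2 + (npow \<epsilon> p)\<^sup>2)) * (2 * (Y\<^sup>2 + 1) * (1 + \<epsilon>\<^sup>2))"
  proof (intro mult_mono mult_nonneg_nonneg)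
    show "(X + Z)\<^sup>2 \<le> 6 * ((npow A p)\<^sup>2 + (npow B p)\<^sup>2 + 1) * (1 + (npow r p)\<^sup>2 + (npow \<epsilon> p)\<^sup>2)"
      unfolding X_def Z_def by (rule sq_sum_le_product)
    show "(Y + \<epsilon>)\<^sup>2 \<le> 2 * (Y\<^sup>2 + 1) * (1 + \<epsilon>\<^sup>2)"
      using zero_le_power2[of "Y - \<epsilon>"] mult_nonneg_nonneg[of "Y\<^sup>2" "\<epsilon>\<^sup>2"]
      by (simp add: power2_eq_square algebra_simps)
  qed simp_all
  also have "1 + (npow r p)\<^sup>2 + (npow \<epsilon> p)\<^sup>2 = 1 + npow r (2 * p) + npow \<epsilon> (2 * p)"
    using npow_double[of r p] npow_double[of \<epsilon> p] assms \<open>0 \<le> p\<close> by simp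
  finally show ?thesis
    by (simp add: c_def p_def algebra_simps)
qed

lemma dot_self_nonneg: "0 \<le> dot d v v"
  unfolding dot_def by (intro sum_nonneg) simp

lemma vnorm_nonneg: "0 \<le> vnorm d v"
  by (simp add: vnorm_def dot_self_nonneg)

lemma vnorm_power2: "(vnorm d v)\<^sup>2 = dot d v v"
  by (simp add: vnorm_def dot_self_nonneg)

lemma abs_dot_le: "\<bar>dot d v w\<bar> \<le> vnorm d v * vnorm d w"
proof -
  have "(dot d v w)\<^sup>2 \<le> dot d v v * dot d w w"
    unfolding dot_def using Cauchy_Schwarz_ineq_sum[of v w "{..<d}"] by (simp add: power2_eq_square)
  then show ?thesis
    by (metis real_sqrt_abs real_sqrt_le_mono real_sqrt_mult vnorm_def)
qed

lemma dot_add_right: "dot d v (\<lambda>i. x i + y i) = dot d v x + dot d v y"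
  by (simp add: dot_def algebra_simps sum.distrib)

lemma dot_diff_left: "dot d (\<lambda>i. v i - w i) x = dot d v x - dot d w x"
  by (simp add: dot_def algebra_simps sum_subtractf)

lemma dot_divide_left: "dot d (\<lambda>i. v i / c) x = dot d v x / c"
  by (simp add: dot_def sum_divide_distrib)

lemma vnorm_proj_U:
  assumes "1 \<le> k" "orthonormal_rows k d U"
  shows "vnorm d (proj_U k d U w) = 1"
proof (cases "vnorm k (Umul d U w) = 0")
  case True
  then have "dot d (proj_U k d U w) (proj_U k d U w) = dot d (U 0) (U 0)"
    unfolding proj_U_def by (simp add: dot_def)
  also have "\<dots> = 1" using assms unfolding orthonormal_rows_def by auto
  finally show ?thesis by (simp add: vnorm_def)
next
  case False
  define c where "c = Umul d U w"
  define n where "n = vnorm k c"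
  have "0 < n" using False vnorm_nonneg[of k c] by (simp add: n_def c_def)
  \<comment> \<open>Orthonormality of the rows turns \<open>\<parallel>U\<^sup>T c\<parallel>\<^sup>2\<close> into \<open>\<parallel>c\<parallel>\<^sup>2\<close>.\<close>
  have rows: "(\<Sum>m<k. c l * c m * dot d (U l) (U m)) = c l * c l" if "l < k" for l
  proof -
    have "(\<Sum>m<k. c l * c m * dot d (U l) (U m)) = (\<Sum>m<k. if m = l then c l * c l else 0)"
      using assms(2) that unfolding orthonormal_rows_def by (intro sum.cong) auto
    then show ?thesis using that by simp
  qed
  have "dot d (proj_U k d U w) (proj_U k d U w)
        = (\<Sum>i<d. (\<Sum>l<k. U l i * c l) * (\<Sum>m<k. U m i * c m)) / n\<^sup>2"
    using False unfolding proj_U_def c_def[symmetric] n_def[symmetric]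
    by (simp add: dot_def sum_divide_distrib[symmetric] power2_eq_square)
  also have "(\<Sum>i<d. (\<Sum>l<k. U l i * c l) * (\<Sum>m<k. U m i * c m))
             = (\<Sum>l<k. \<Sum>m<k. c l * c m * dot d (U l) (U m))"
    by (simp add: dot_def sum_product sum_distrib_left algebra_simps sum.swap[of _ "{..<d}"])
  also have "\<dots> = (\<Sum>l<k. c l * c l)"
    using rows by (intro sum.cong) auto
  also have "\<dots> = n\<^sup>2" by (simp add: n_def vnorm_power2 dot_def)
  finally show ?thesis using \<open>0 < n\<close> by (simp add: vnorm_def)
qed

text \<open>If \<open>v = 0\<close> any unit vector will do; \<open>w\<close> is just a witness that one exists.\<close>
lemma obtain_unit_direction:
  assumes "vnorm d w = 1"
  obtains u where "vnorm d u = 1" "\<And>x. dot d v x = vnorm d v * dot d u x"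
proof (cases "vnorm d v = 0")
  case True
  have "dot d v x = 0" for x
    using abs_dot_le[of d v x] True by simp
  then show ?thesis using that[of w] assms True by simp
next
  case False
  have "dot d (\<lambda>i. v i / vnorm d v) (\<lambda>i. v i / vnorm d v) = dot d v v / (vnorm d v)\<^sup>2"
    by (simp add: dot_def sum_divide_distrib power2_eq_square)
  also have "\<dots> = 1" using False by (metis vnorm_power2 divide_self power_not_zero)
  finally have "vnorm d (\<lambda>i. v i / vnorm d v) = 1" by (simp add: vnorm_def)
  moreover have "dot d v x = vnorm d v * dot d (\<lambda>i. v i / vnorm d v) x" for x
    using False by (simp add: dot_divide_left)
  ultimately show ?thesis using that by blast
qed

definition psi2_weight :: "nat \<Rightarrow> real \<Rightarrow> (nat \<Rightarrow> real) \<Rightarrow> (nat \<Rightarrow> real) \<Rightarrow> real" where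
  "psi2_weight d t v x = exp ((dot d v x)\<^sup>2 / t\<^sup>2)"

lemma psi2_weight_measurable:
  assumes "\<forall>i<d. (\<lambda>x. x i) \<in> borel_measurable M"
  shows "(\<lambda>x. psi2_weight d t v x) \<in> borel_measurable M"
proof -
  have "(\<lambda>x. dot d v x) \<in> borel_measurable M"
    unfolding dot_def using assms by (intro borel_measurable_sum borel_measurable_times) auto
  then show ?thesis unfolding psi2_weight_def by measurable
qed

lemma nn_integral_psi2_weight_le:
  assumes "vec_psi2_norm d M \<le> ereal K" "K < t" "vnorm d v = 1"
  shows "(\<integral>\<^sup>+ x. ennreal (psi2_weight d t v x) \<partial>M) \<le> 2"
proof -
  have "psi2_norm M (\<lambda>x. dot d v x) \<le> vec_psi2_norm d M"
    unfolding vec_psi2_norm_def using assms(3) by (intro SUP_upper) auto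
  then have "psi2_norm M (\<lambda>x. dot d v x) < ereal t"
    using assms(1,2) by (meson ereal_less_eq(3) order.trans order_le_less_trans less_ereal.simps(1))
  then obtain t0 where "0 < t0" "t0 < t"
    and t0: "(\<integral>\<^sup>+ x. ennreal (exp ((dot d v x)\<^sup>2 / t0\<^sup>2)) \<partial>M) \<le> 2"
    unfolding psi2_norm_def Inf_less_iff by auto
  have "(\<integral>\<^sup>+ x. ennreal (psi2_weight d t v x) \<partial>M)
      \<le> (\<integral>\<^sup>+ x. ennreal (exp ((dot d v x)\<^sup>2 / t0\<^sup>2)) \<partial>M)"
  proof (intro nn_integral_mono ennreal_leI)
    fix x
    have "t0\<^sup>2 \<le> t\<^sup>2" using \<open>0 < t0\<close> \<open>t0 < t\<close> by (intro power_mono) auto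
    then show "psi2_weight d t v x \<le> exp ((dot d v x)\<^sup>2 / t0\<^sup>2)"
      using \<open>0 < t0\<close> \<open>t0 < t\<close> unfolding psi2_weight_def
      by (intro exp_mono divide_left_mono) auto
  qed
  with t0 show ?thesis by simp
qed

lemma nn_integral_sum_psi2_weights_le:
  assumes "finite S" "\<forall>i<d. (\<lambda>x. x i) \<in> borel_measurable M"
    and "vec_psi2_norm d M \<le> ereal K" "K < t" "0 \<le> c"
    and "\<And>j. j \<in> S \<Longrightarrow> vnorm d (v1 j) = 1 \<and> vnorm d (v2 j) = 1 \<and> vnorm d (v3 j) = 1"
  shows "(\<integral>\<^sup>+ x. ennreal (c * (\<Sum>j\<in>S. psi2_weight d t (v1 j) x + psi2_weight d t (v2 j) x
                                      + psi2_weight d t (v3 j) x)) \<partial>M)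
         \<le> ennreal (6 * c * card S)"
proof -
  have pos: "0 \<le> psi2_weight d t v x" for v x by (simp add: psi2_weight_def)
  have split: "ennreal (c * (\<Sum>j\<in>S. psi2_weight d t (v1 j) x + psi2_weight d t (v2 j) x
                                    + psi2_weight d t (v3 j) x))
      = ennreal c * (\<Sum>j\<in>S. ennreal (psi2_weight d t (v1 j) x) + ennreal (psi2_weight d t (v2 j) x)
                              + ennreal (psi2_weight d t (v3 j) x))" for x
    using pos \<open>0 \<le> c\<close> by (simp add: ennreal_mult add_nonneg_nonneg sum_nonneg flip: sum_ennreal)
  have "(\<integral>\<^sup>+ x. ennreal (c * (\<Sum>j\<in>S. psi2_weight d t (v1 j) x + psi2_weight d t (v2 j) x
                                      + psi2_weight d t (v3 j) x)) \<partial>M)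
      = ennreal c * (\<Sum>j\<in>S. (\<integral>\<^sup>+ x. ennreal (psi2_weight d t (v1 j) x) \<partial>M)
                              + (\<integral>\<^sup>+ x. ennreal (psi2_weight d t (v2 j) x) \<partial>M)
                              + (\<integral>\<^sup>+ x. ennreal (psi2_weight d t (v3 j) x) \<partial>M))"
    unfolding split using psi2_weight_measurable[OF assms(2)]
    by (simp add: nn_integral_cmult nn_integral_sum nn_integral_add borel_measurable_sum)
  also have "\<dots> \<le> ennreal c * (\<Sum>j\<in>S. 2 + 2 + 2)"
    using nn_integral_psi2_weight_le[OF assms(3,4)] assms(6)
    by (intro mult_left_mono sum_mono add_mono) auto
  also have "\<dots> = ennreal (6 * c * card S)"
    using \<open>0 \<le> c\<close> by (simp add: ennreal_mult ennreal_of_nat_eq_real_of_nat mult_ac)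
  finally show ?thesis .
qed

lemma preactivation_bounds:
  assumes "vnorm d w = 1" "vnorm d w' = 1" "vnorm d u = 1" "\<bar>\<beta>\<bar> \<le> r" "\<delta> \<in> dball d \<epsilon>"
    and u: "\<And>x. dot d (\<lambda>i. w' i - w i) x = \<nu> * dot d u x" and "0 \<le> \<nu>"
  shows "\<bar>dot d w' (\<lambda>i. x i + \<delta> i) + \<beta>\<bar> \<le> \<bar>dot d w' x\<bar> + \<epsilon> + r"
    and "\<bar>dot d w (\<lambda>i. x i + \<delta> i) + \<beta>\<bar> \<le> \<bar>dot d w x\<bar> + \<epsilon> + r"
    and "\<bar>(dot d w' (\<lambda>i. x i + \<delta> i) + \<beta>) - (dot d w (\<lambda>i. x i + \<delta> i) + \<beta>)\<bar>
           \<le> \<nu> * (\<bar>dot d u x\<bar> + \<epsilon>)"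
proof -
  have "vnorm d \<delta> \<le> \<epsilon>" using assms(5) by (simp add: dball_def)
  then have "\<bar>dot d w \<delta>\<bar> \<le> \<epsilon>" "\<bar>dot d w' \<delta>\<bar> \<le> \<epsilon>" "\<bar>dot d u \<delta>\<bar> \<le> \<epsilon>"
    using abs_dot_le[of d w \<delta>] abs_dot_le[of d w' \<delta>] abs_dot_le[of d u \<delta>] assms(1-3) by simp_all
  then show "\<bar>dot d w' (\<lambda>i. x i + \<delta> i) + \<beta>\<bar> \<le> \<bar>dot d w' x\<bar> + \<epsilon> + r"
    and "\<bar>dot d w (\<lambda>i. x i + \<delta> i) + \<beta>\<bar> \<le> \<bar>dot d w x\<bar> + \<epsilon> + r"
    using \<open>\<bar>\<beta>\<bar> \<le> r\<close> unfolding dot_add_right by linarith+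
  have "(dot d w' (\<lambda>i. x i + \<delta> i) + \<beta>) - (dot d w (\<lambda>i. x i + \<delta> i) + \<beta>)
        = \<nu> * dot d u x + \<nu> * dot d u \<delta>"
    using u[of x] u[of \<delta>] by (simp add: dot_add_right dot_diff_left algebra_simps)
  also have "\<bar>\<dots>\<bar> \<le> \<nu> * \<bar>dot d u x\<bar> + \<nu> * \<epsilon>"
    using \<open>0 \<le> \<nu>\<close> \<open>\<bar>dot d u \<delta>\<bar> \<le> \<epsilon>\<close>
    by (intro order_trans[OF abs_triangle_ineq] add_mono) (simp_all add: abs_mult mult_left_mono)
  finally show "\<bar>(dot d w' (\<lambda>i. x i + \<delta> i) + \<beta>) - (dot d w (\<lambda>i. x i + \<delta> i) + \<beta>)\<bar>
           \<le> \<nu> * (\<bar>dot d u x\<bar> + \<epsilon>)"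
    by (simp add: distrib_left)
qed

lemma neuron_diff_sq_le:
  assumes "1 \<le> k" "orthonormal_rows k d U" "vnorm d w = 1" "\<bar>\<beta>\<bar> \<le> r"
    and close: "(vnorm d (\<lambda>i. proj_U k d U w i - w i))\<^sup>2 \<le> 2 * \<zeta>"
    and PL: "PL_cond \<sigma> q L" and "1 \<le> q" "0 \<le> \<epsilon>"
    and "0 \<le> C0" and C0: "\<And>A B Y. 0 \<le> A \<Longrightarrow> 0 \<le> B \<Longrightarrow> 0 \<le> Y \<Longrightarrow>
      ((npow A (q - 1))\<^sup>2 + (npow B (q - 1))\<^sup>2 + 1) * (Y\<^sup>2 + 1)
        \<le> C0 * (exp ((A / t)\<^sup>2) + exp ((B / t)\<^sup>2) + exp ((Y / t)\<^sup>2))"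
  obtains u where "vnorm d u = 1"
    and "\<And>x \<delta>. \<delta> \<in> dball d \<epsilon> \<Longrightarrow>
      (\<sigma> (dot d (proj_U k d U w) (\<lambda>i. x i + \<delta> i) + \<beta>) - \<sigma> (dot d w (\<lambda>i. x i + \<delta> i) + \<beta>))\<^sup>2
        \<le> 96 * (npow 3 (q - 1))\<^sup>2 * C0 * L\<^sup>2 * \<zeta>
           * (1 + npow r (2 * (q - 1)) + npow \<epsilon> (2 * (q - 1))) * (1 + \<epsilon>\<^sup>2)
           * (psi2_weight d t w x + psi2_weight d t (proj_U k d U w) x + psi2_weight d t u x)"
proof -
  define w' where "w' = proj_U k d U w"
  define \<nu> where "\<nu> = vnorm d (\<lambda>i. w' i - w i)"
  define H where "H = 1 + npow r (2 * (q - 1)) + npow \<epsilon> (2 * (q - 1))"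
  obtain u where "vnorm d u = 1" and u: "\<And>x. dot d (\<lambda>i. w' i - w i) x = \<nu> * dot d u x"
    using obtain_unit_direction[OF \<open>vnorm d w = 1\<close>] unfolding \<nu>_def by metis
  have "vnorm d w' = 1" using vnorm_proj_U[OF assms(1,2)] by (simp add: w'_def)
  have "0 \<le> \<nu>" "0 \<le> r" using \<open>\<bar>\<beta>\<bar> \<le> r\<close> by (simp_all add: \<nu>_def vnorm_nonneg)
  have "0 \<le> H" by (simp add: H_def npow_nonneg add_nonneg_nonneg)
  have "(\<sigma> (dot d w' (\<lambda>i. x i + \<delta> i) + \<beta>) - \<sigma> (dot d w (\<lambda>i. x i + \<delta> i) + \<beta>))\<^sup>2
        \<le> 48 * (npow 3 (q - 1))\<^sup>2 * L\<^sup>2 * (2 * \<zeta>) * H * (1 + \<epsilon>\<^sup>2)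
           * (C0 * (psi2_weight d t w x + psi2_weight d t w' x + psi2_weight d t u x))"
    if "\<delta> \<in> dball d \<epsilon>" for x \<delta>
  proof -
    note bounds = preactivation_bounds[OF \<open>vnorm d w = 1\<close> \<open>vnorm d w' = 1\<close> \<open>vnorm d u = 1\<close>
        \<open>\<bar>\<beta>\<bar> \<le> r\<close> that u \<open>0 \<le> \<nu>\<close>, of x]
    have "(\<sigma> (dot d w' (\<lambda>i. x i + \<delta> i) + \<beta>) - \<sigma> (dot d w (\<lambda>i. x i + \<delta> i) + \<beta>))\<^sup>2
        \<le> 48 * (npow 3 (q - 1))\<^sup>2 * L\<^sup>2 * \<nu>\<^sup>2 * H * (1 + \<epsilon>\<^sup>2) * (((npow \<bar>dot d w x\<bar> (q - 1))\<^sup>2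
           + (npow \<bar>dot d w' x\<bar> (q - 1))\<^sup>2 + 1) * (\<bar>dot d u x\<bar>\<^sup>2 + 1))"
      unfolding H_def by (rule PL_diff_sq_le[OF PL \<open>1 \<le> q\<close> \<open>0 \<le> \<epsilon>\<close> \<open>0 \<le> r\<close> _ _ _ \<open>0 \<le> \<nu>\<close> bounds])
        simp_all
    also have "\<dots> \<le> 48 * (npow 3 (q - 1))\<^sup>2 * L\<^sup>2 * \<nu>\<^sup>2 * H * (1 + \<epsilon>\<^sup>2)
           * (C0 * (psi2_weight d t w x + psi2_weight d t w' x + psi2_weight d t u x))"
      using C0[of "\<bar>dot d w x\<bar>" "\<bar>dot d w' x\<bar>" "\<bar>dot d u x\<bar>"] \<open>0 \<le> H\<close>
      by (intro mult_left_mono) (simp_all add: psi2_weight_def power_divide)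
    also have "\<dots> \<le> 48 * (npow 3 (q - 1))\<^sup>2 * L\<^sup>2 * (2 * \<zeta>) * H * (1 + \<epsilon>\<^sup>2)
           * (C0 * (psi2_weight d t w x + psi2_weight d t w' x + psi2_weight d t u x))"
      using close \<open>0 \<le> H\<close> \<open>0 \<le> C0\<close>
      by (intro mult_right_mono mult_left_mono)
        (simp_all add: \<nu>_def w'_def psi2_weight_def add_nonneg_nonneg)
    finally show ?thesis .
  qed
  then show ?thesis
    using that[OF \<open>vnorm d u = 1\<close>] by (simp add: w'_def H_def mult_ac)
qed

lemma net_diff_sq_le:
  assumes "S \<subseteq> {..<N}" "\<forall>j. j \<notin> S \<longrightarrow> a j = 0"
  shows "(net N d \<sigma> a V b x - net N d \<sigma> a W b x)\<^sup>2
         \<le> (vnorm N a)\<^sup>2 * (\<Sum>j\<in>S. (\<sigma> (dot d (V j) x + b j) - \<sigma> (dot d (W j) x + b j))\<^sup>2)"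
proof -
  have "net N d \<sigma> a V b x - net N d \<sigma> a W b x
        = (\<Sum>j<N. a j * (\<sigma> (dot d (V j) x + b j) - \<sigma> (dot d (W j) x + b j)))"
    unfolding net_def by (simp add: sum_subtractf[symmetric] algebra_simps)
  also have "\<dots> = (\<Sum>j\<in>S. a j * (\<sigma> (dot d (V j) x + b j) - \<sigma> (dot d (W j) x + b j)))"
    using assms by (intro sum.mono_neutral_right) auto
  finally have "(net N d \<sigma> a V b x - net N d \<sigma> a W b x)\<^sup>2
      \<le> (\<Sum>j\<in>S. (a j)\<^sup>2) * (\<Sum>j\<in>S. (\<sigma> (dot d (V j) x + b j) - \<sigma> (dot d (W j) x + b j))\<^sup>2)"
    by (simp add: Cauchy_Schwarz_ineq_sum)
  also have "(\<Sum>j\<in>S. (a j)\<^sup>2) = (\<Sum>j<N. (a j)\<^sup>2)"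
    using assms by (intro sum.mono_neutral_left) auto
  also have "\<dots> = (vnorm N a)\<^sup>2"
    unfolding vnorm_power2 dot_def by (simp add: power2_eq_square)
  finally show ?thesis .
qed

definition robust_sq_gap :: "nat \<Rightarrow> nat \<Rightarrow> (real \<Rightarrow> real) \<Rightarrow> (nat \<Rightarrow> real)
    \<Rightarrow> (nat \<Rightarrow> nat \<Rightarrow> real) \<Rightarrow> (nat \<Rightarrow> nat \<Rightarrow> real) \<Rightarrow> (nat \<Rightarrow> real) \<Rightarrow> real \<Rightarrow> (nat \<Rightarrow> real) \<Rightarrow> real"
  where "robust_sq_gap N d \<sigma> a V W b \<epsilon> x = (SUP \<delta>\<in>dball d \<epsilon>.
    (net N d \<sigma> a V b (\<lambda>i. x i + \<delta> i) - net N d \<sigma> a W b (\<lambda>i. x i + \<delta> i))\<^sup>2)"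

lemma robust_sq_gap_le:
  fixes q t C0 :: real
  assumes q: "1 \<le> q" and "0 \<le> \<epsilon>" and PL: "PL_cond \<sigma> q L"
    and "0 \<le> C0" and C0: "\<And>A B Y. 0 \<le> A \<Longrightarrow> 0 \<le> B \<Longrightarrow> 0 \<le> Y \<Longrightarrow>
      ((npow A (q - 1))\<^sup>2 + (npow B (q - 1))\<^sup>2 + 1) * (Y\<^sup>2 + 1)
        \<le> C0 * (exp ((A / t)\<^sup>2) + exp ((B / t)\<^sup>2) + exp ((Y / t)\<^sup>2))"
    and U: "1 \<le> k" "orthonormal_rows k d U"
    and W: "\<forall>j<N. vnorm d (W j) = 1" and b: "\<forall>j<N. \<bar>b j\<bar> \<le> r_b"
    and S: "S \<subseteq> {..<N}" "\<forall>j\<in>S. (vnorm d (\<lambda>i. proj_U k d U (W j) i - W j i))\<^sup>2 \<le> 2 * \<zeta>"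
    and a: "\<forall>j. j \<notin> S \<longrightarrow> a j = 0"
  shows "\<exists>u. (\<forall>j\<in>S. vnorm d (u j) = 1) \<and>
    (\<forall>x. robust_sq_gap N d \<sigma> a (projW k d U W) W b \<epsilon> x
      \<le> (vnorm N a)\<^sup>2 * (96 * (npow 3 (q - 1))\<^sup>2 * C0 * L\<^sup>2 * \<zeta>
            * (1 + npow r_b (2 * (q - 1)) + npow \<epsilon> (2 * (q - 1))) * (1 + \<epsilon>\<^sup>2))
         * (\<Sum>j\<in>S. psi2_weight d t (W j) x + psi2_weight d t (proj_U k d U (W j)) x
                    + psi2_weight d t (u j) x))"
proof -
  define D where "D j x \<delta> = (\<sigma> (dot d (proj_U k d U (W j)) (\<lambda>i. x i + \<delta> i) + b j)
                             - \<sigma> (dot d (W j) (\<lambda>i. x i + \<delta> i) + b j))\<^sup>2" for j x \<delta>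
  define K1 where "K1 = 96 * (npow 3 (q - 1))\<^sup>2 * C0 * L\<^sup>2 * \<zeta>
                        * (1 + npow r_b (2 * (q - 1)) + npow \<epsilon> (2 * (q - 1))) * (1 + \<epsilon>\<^sup>2)"
  define \<Phi> where "\<Phi> j u x = psi2_weight d t (W j) x + psi2_weight d t (proj_U k d U (W j)) x
                              + psi2_weight d t u x" for j u x
  have "\<forall>j\<in>S. \<exists>u. vnorm d u = 1 \<and> (\<forall>x. \<forall>\<delta>\<in>dball d \<epsilon>. D j x \<delta> \<le> K1 * \<Phi> j u x)"
  proof
    fix j assume "j \<in> S"
    then have "j < N" using S(1) by auto
    obtain u where "vnorm d u = 1" and "\<And>x \<delta>. \<delta> \<in> dball d \<epsilon> \<Longrightarrow> D j x \<delta> \<le> K1 * \<Phi> j u x"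
      using neuron_diff_sq_le[OF U W[rule_format, OF \<open>j < N\<close>] b[rule_format, OF \<open>j < N\<close>]
          S(2)[rule_format, OF \<open>j \<in> S\<close>] PL q \<open>0 \<le> \<epsilon>\<close> \<open>0 \<le> C0\<close> C0]
      unfolding D_def K1_def \<Phi>_def by blast
    then show "\<exists>u. vnorm d u = 1 \<and> (\<forall>x. \<forall>\<delta>\<in>dball d \<epsilon>. D j x \<delta> \<le> K1 * \<Phi> j u x)"
      by blast
  qed
  then obtain u
    where u: "\<forall>j\<in>S. vnorm d (u j) = 1 \<and> (\<forall>x. \<forall>\<delta>\<in>dball d \<epsilon>. D j x \<delta> \<le> K1 * \<Phi> j (u j) x)"
    by (rule bchoice[THEN exE])
  have "dball d \<epsilon> \<noteq> {}"
    using \<open>0 \<le> \<epsilon>\<close> by (auto simp: dball_def vnorm_def dot_def intro!: exI[of _ "\<lambda>_. 0"])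
  have "robust_sq_gap N d \<sigma> a (projW k d U W) W b \<epsilon> x
        \<le> (vnorm N a)\<^sup>2 * K1 * (\<Sum>j\<in>S. \<Phi> j (u j) x)" for x
    unfolding robust_sq_gap_def
  proof (rule cSUP_least[OF \<open>dball d \<epsilon> \<noteq> {}\<close>])
    fix \<delta> assume "\<delta> \<in> dball d \<epsilon>"
    have "(net N d \<sigma> a (projW k d U W) b (\<lambda>i. x i + \<delta> i) - net N d \<sigma> a W b (\<lambda>i. x i + \<delta> i))\<^sup>2
        \<le> (vnorm N a)\<^sup>2 * (\<Sum>j\<in>S. D j x \<delta>)"
      unfolding D_def projW_def by (rule net_diff_sq_le[OF S(1) a])
    also have "\<dots> \<le> (vnorm N a)\<^sup>2 * (K1 * (\<Sum>j\<in>S. \<Phi> j (u j) x))"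
      using u \<open>\<delta> \<in> dball d \<epsilon>\<close> by (intro mult_left_mono) (simp_all add: sum_distrib_left sum_mono)
    finally show "(net N d \<sigma> a (projW k d U W) b (\<lambda>i. x i + \<delta> i) - net N d \<sigma> a W b (\<lambda>i. x i + \<delta> i))\<^sup>2
        \<le> (vnorm N a)\<^sup>2 * K1 * (\<Sum>j\<in>S. \<Phi> j (u j) x)"
      by (simp add: mult.assoc)
  qed
  with u show ?thesis
    unfolding K1_def \<Phi>_def by blast
qed

lemma nn_integral_robust_sq_gap_le:
  fixes q t C0 :: real
  assumes q: "1 \<le> q" and "K < t"
    and "0 \<le> C0" and C0: "\<And>A B Y. 0 \<le> A \<Longrightarrow> 0 \<le> B \<Longrightarrow> 0 \<le> Y \<Longrightarrow>
      ((npow A (q - 1))\<^sup>2 + (npow B (q - 1))\<^sup>2 + 1) * (Y\<^sup>2 + 1)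
        \<le> C0 * (exp ((A / t)\<^sup>2) + exp ((B / t)\<^sup>2) + exp ((Y / t)\<^sup>2))"
    and U: "1 \<le> k" "orthonormal_rows k d U"
    and W: "\<forall>j<N. vnorm d (W j) = 1" and b: "\<forall>j<N. \<bar>b j\<bar> \<le> r_b"
    and S: "S \<subseteq> {..<N}" "\<forall>j\<in>S. (vnorm d (\<lambda>i. proj_U k d U (W j) i - W j i))\<^sup>2 \<le> 2 * \<zeta>"
    and a: "\<forall>j. j \<notin> S \<longrightarrow> a j = 0" "vnorm N a \<le> r_a / sqrt (real (card S))"
    and M: "\<forall>i<d. (\<lambda>x. x i) \<in> borel_measurable M" "vec_psi2_norm d M \<le> ereal K"
    and PL: "PL_cond \<sigma> q L" and "0 \<le> \<epsilon>"
  shows "(\<integral>\<^sup>+ x. ennreal (robust_sq_gap N d \<sigma> a (projW k d U W) W b \<epsilon> x) \<partial>M)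
         \<le> ennreal (576 * (npow 3 (q - 1))\<^sup>2 * C0 * L\<^sup>2 * r_a\<^sup>2
                     * (1 + npow r_b (2 * (q - 1)) + npow \<epsilon> (2 * (q - 1))) * (1 + \<epsilon>\<^sup>2) * \<zeta>)"
proof -
  define K1 where "K1 = 96 * (npow 3 (q - 1))\<^sup>2 * C0 * L\<^sup>2 * \<zeta>
                        * (1 + npow r_b (2 * (q - 1)) + npow \<epsilon> (2 * (q - 1))) * (1 + \<epsilon>\<^sup>2)"
  obtain u where u: "\<forall>j\<in>S. vnorm d (u j) = 1"
    and sup_le: "\<And>x. robust_sq_gap N d \<sigma> a (projW k d U W) W b \<epsilon> x
      \<le> (vnorm N a)\<^sup>2 * K1 * (\<Sum>j\<in>S. psi2_weight d t (W j) x + psi2_weight d t (proj_U k d U (W j)) x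
                                     + psi2_weight d t (u j) x)"
    using robust_sq_gap_le[OF q \<open>0 \<le> \<epsilon>\<close> PL \<open>0 \<le> C0\<close> C0 U W b S a(1)] unfolding K1_def by blast
  show ?thesis
  proof (cases "S = {}")
    \<comment> \<open>Here \<open>\<zeta>\<close> may be negative, but the two networks coincide.\<close>
    case True
    then show ?thesis using sup_le by (simp add: ennreal_neg)
  next
    case False
    have "finite S" using S(1) finite_subset by blast
    obtain j0 where "j0 \<in> S" using False by blast
    then have "(vnorm d (\<lambda>i. proj_U k d U (W j0) i - W j0 i))\<^sup>2 \<le> 2 * \<zeta>" using S(2) by blast
    then have "0 \<le> \<zeta>" by (smt (verit) zero_le_power2)
    then have "0 \<le> K1" using \<open>0 \<le> C0\<close> by (simp add: K1_def npow_nonneg add_nonneg_nonneg)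
    have "(vnorm N a)\<^sup>2 \<le> (r_a / sqrt (card S))\<^sup>2"
      using a(2) vnorm_nonneg by (intro power_mono) auto
    then have norm_card: "(vnorm N a)\<^sup>2 * card S \<le> r_a\<^sup>2"
      using False \<open>finite S\<close> by (simp add: power_divide field_simps card_gt_0_iff)
    have "(\<integral>\<^sup>+ x. ennreal (robust_sq_gap N d \<sigma> a (projW k d U W) W b \<epsilon> x) \<partial>M)
        \<le> (\<integral>\<^sup>+ x. ennreal ((vnorm N a)\<^sup>2 * K1 * (\<Sum>j\<in>S. psi2_weight d t (W j) x
                 + psi2_weight d t (proj_U k d U (W j)) x + psi2_weight d t (u j) x)) \<partial>M)"
      using sup_le by (intro nn_integral_mono ennreal_leI)
    also have "\<dots> \<le> ennreal (6 * ((vnorm N a)\<^sup>2 * K1) * card S)"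
      using \<open>0 \<le> K1\<close> u W S(1) vnorm_proj_U[OF U]
      by (intro nn_integral_sum_psi2_weights_le[OF \<open>finite S\<close> M \<open>K < t\<close>]) auto
    also have "\<dots> \<le> ennreal (6 * r_a\<^sup>2 * K1)"
      using mult_left_mono[OF norm_card, of "6 * K1"] \<open>0 \<le> K1\<close>
      by (intro ennreal_leI) (simp add: mult_ac)
    finally show ?thesis by (simp add: K1_def mult_ac)
  qed
qed

theorem lemmaD:
  fixes q K :: real
  assumes "q \<ge> 1" and "K > 0"
  shows "\<exists>C. \<forall>(d::nat) (k::nat) (N::nat) U W b S a (M :: (nat \<Rightarrow> real) measure)
              (\<sigma> :: real \<Rightarrow> real) L \<epsilon> \<zeta> r_b r_a.
     ( k \<ge> 1 \<and> orthonormal_rows k d U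
     \<and> (\<forall>j<N. vnorm d (W j) = 1) \<and> r_b \<ge> 0 \<and> (\<forall>j<N. \<bar>b j\<bar> \<le> r_b)
     \<and> S \<subseteq> {..<N}
     \<and> (\<forall>j\<in>S. (vnorm d (\<lambda>i. proj_U k d U (W j) i - W j i))\<^sup>2 \<le> 2 * \<zeta>)
     \<and> (\<forall>j. j \<notin> S \<longrightarrow> a j = 0) \<and> vnorm N a \<le> r_a / sqrt (real (card S))
     \<and> prob_space M
     \<and> (\<forall>i<d. integrable M (\<lambda>x. x i) \<and> (\<integral>x. x i \<partial>M) = 0)
     \<and> vec_psi2_norm d M \<le> ereal K
     \<and> PL_cond \<sigma> q L \<and> \<epsilon> \<ge> 0 )
     \<longrightarrow> (\<integral>\<^sup>+ x. ennreal (SUP \<delta>\<in>dball d \<epsilon>.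
              (net N d \<sigma> a (projW k d U W) b (\<lambda>i. x i + \<delta> i) - net N d \<sigma> a W b (\<lambda>i. x i + \<delta> i))\<^sup>2) \<partial>M)
         \<le> ennreal (C * L\<^sup>2 * r_a\<^sup>2 * (1 + npow r_b (2 * (q - 1)) + npow \<epsilon> (2 * (q - 1)))
                     * (1 + \<epsilon>\<^sup>2) * \<zeta>)"
proof -
  have "K < 2 * K" using \<open>K > 0\<close> by simp
  obtain C0 where "0 \<le> C0" and C0: "\<And>A B Y. 0 \<le> A \<Longrightarrow> 0 \<le> B \<Longrightarrow> 0 \<le> Y \<Longrightarrow>
      ((npow A (q - 1))\<^sup>2 + (npow B (q - 1))\<^sup>2 + 1) * (Y\<^sup>2 + 1)
        \<le> C0 * (exp ((A / (2 * K))\<^sup>2) + exp ((B / (2 * K))\<^sup>2) + exp ((Y / (2 * K))\<^sup>2))"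
    using poly_le_exp_sum[of "q - 1" "2 * K"] assms by auto
  show ?thesis
    by (intro exI[of _ "576 * (npow 3 (q - 1))\<^sup>2 * C0"] allI impI, elim conjE)
      (rule nn_integral_robust_sq_gap_le[OF \<open>q \<ge> 1\<close> \<open>K < 2 * K\<close> \<open>0 \<le> C0\<close> C0,
          unfolded robust_sq_gap_def];
        auto intro: borel_measurable_integrable)
qed

end
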